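(* Let $A$ be a quantum B-algebra, let $X,Y,F\in U(A)$ and let $F$ be a filter of $A$. Then $\mu_F(X)\cdot\mu_F(Y)\subseteq\mu_F(X\cdot Y)$. Moreover, $\mu_F:U(A)\to U(A)$ is a conucleus on $U(A)$, and the set $U(F)=\{U\in U(A)\mid U\subseteq F\}=\{\mu_F(X)\mid X\in U(A)\}$, equipped with the restriction of the multiplication of $U(A)$, is a subquantale of $U(A)$.
   Context: A quantum B-algebra is a poset $(A,\le)$ with binary operations $\to,\leadsto$ such that for all $x,y,z\in A$: $y\to z\le(x\to y)\to(x\to z)$; $y\leadsto z\le(x\leadsto y)\leadsto(x\leadsto z)$; $y\le z$ implies $x\to y\le x\to z$; and $x\le y\to z$ iff $y\le x\leadsto z$. $U(A)$ denotes the set of all upper subsets of $A$ (subsets $X$ such that $b\in X$ and $a\ge b$ imply $a\in X$; the empty set included), ordered by inclusion; it is a quantale (complete lattice whose joins are unions, with an associative multiplication distributing over arbitrary joins on both sides) under $X\cdot Y=\{a\in A\mid \exists y\in Y:\ y\to a\in X\}$. A filter of $A$ is a nonempty $F\in U(A)$ with $F\cdot F\subseteq F$. For $F,X\in U(A)$, $\mu_F(X)=F\cap X$. A conucleus on a quantale $Q$ is a map $g:Q\to Q$ that is order preserving, satisfies $g(a)\le a$ and $g(g(a))=g(a)$, and $g(a)\cdot g(b)\le g(a\cdot b)$ for all $a,b$. A subquantale is a subset closed under arbitrary joins and under the multiplication. *)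

theory Defs
  imports Main
begin

text \<open>A quantum B-algebra: the whole type 'a is the carrier, with an explicit partial
order le and two binary operations imp (written \<rightarrow>) and limp (written \<leadsto>).\<close>

definition quantum_B_algebra ::
  "('a \<Rightarrow> 'a \<Rightarrow> bool) \<Rightarrow> ('a \<Rightarrow> 'a \<Rightarrow> 'a) \<Rightarrow> ('a \<Rightarrow> 'a \<Rightarrow> 'a) \<Rightarrow> bool" where
  "quantum_B_algebra le imp limp \<longleftrightarrow>
     (\<forall>x. le x x) \<and>
     (\<forall>x y. le x y \<longrightarrow> le y x \<longrightarrow> x = y) \<and>
     (\<forall>x y z. le x y \<longrightarrow> le y z \<longrightarrow> le x z) \<and>
     (\<forall>x y z. le (imp y z) (imp (imp x y) (imp x z))) \<and>
     (\<forall>x y z. le (limp y z) (limp (limp x y) (limp x z))) \<and>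
     (\<forall>x y z. le y z \<longrightarrow> le (imp x y) (imp x z)) \<and>
     (\<forall>x y z. le x (imp y z) \<longleftrightarrow> le y (limp x z))"

definition upper_set :: "('a \<Rightarrow> 'a \<Rightarrow> bool) \<Rightarrow> 'a set \<Rightarrow> bool" where
  "upper_set le X \<longleftrightarrow> (\<forall>a b. b \<in> X \<longrightarrow> le b a \<longrightarrow> a \<in> X)"

definition UA :: "('a \<Rightarrow> 'a \<Rightarrow> bool) \<Rightarrow> 'a set set" where
  "UA le = {X. upper_set le X}"

definition umult :: "('a \<Rightarrow> 'a \<Rightarrow> 'a) \<Rightarrow> 'a set \<Rightarrow> 'a set \<Rightarrow> 'a set" where
  "umult imp X Y = {a. \<exists>y\<in>Y. imp y a \<in> X}"

definition qb_filter :: "('a \<Rightarrow> 'a \<Rightarrow> bool) \<Rightarrow> ('a \<Rightarrow> 'a \<Rightarrow> 'a) \<Rightarrow> 'a set \<Rightarrow> bool" where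
  "qb_filter le imp F \<longleftrightarrow> F \<noteq> {} \<and> F \<in> UA le \<and> umult imp F F \<subseteq> F"

definition mu :: "'a set \<Rightarrow> 'a set \<Rightarrow> 'a set" where
  "mu F X = F \<inter> X"

definition conucleus :: "'b set set \<Rightarrow> ('b set \<Rightarrow> 'b set \<Rightarrow> 'b set) \<Rightarrow> ('b set \<Rightarrow> 'b set) \<Rightarrow> bool" where
  "conucleus Q m g \<longleftrightarrow>
     (\<forall>a\<in>Q. g a \<in> Q) \<and>
     (\<forall>a\<in>Q. \<forall>b\<in>Q. a \<subseteq> b \<longrightarrow> g a \<subseteq> g b) \<and>
     (\<forall>a\<in>Q. g a \<subseteq> a) \<and>
     (\<forall>a\<in>Q. g (g a) = g a) \<and>
     (\<forall>a\<in>Q. \<forall>b\<in>Q. m (g a) (g b) \<subseteq> g (m a b))"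

text \<open>Subquantale of a quantale whose joins are unions: closed under arbitrary joins
  (unions) and under multiplication.\<close>
definition subquantale :: "'b set set \<Rightarrow> ('b set \<Rightarrow> 'b set \<Rightarrow> 'b set) \<Rightarrow> 'b set set \<Rightarrow> bool" where
  "subquantale Q m S \<longleftrightarrow>
     S \<subseteq> Q \<and> (\<forall>K. K \<subseteq> S \<longrightarrow> \<Union>K \<in> S) \<and> (\<forall>a\<in>S. \<forall>b\<in>S. m a b \<in> S)"

end

theory Submission
  imports Defs
begin

lemma quantum_B_algebra_imp_mono:
  assumes "quantum_B_algebra le imp limp" and "le y z"
  shows "le (imp x y) (imp x z)"
  using assms unfolding quantum_B_algebra_def by blast

lemma umult_mono:
  assumes "X \<subseteq> X'" and "Y \<subseteq> Y'"
  shows "umult imp X Y \<subseteq> umult imp X' Y'"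
  using assms unfolding umult_def by blast

lemma umult_in_UA:
  assumes imp_mono: "\<And>x y z. le y z \<Longrightarrow> le (imp x y) (imp x z)"
    and "X \<in> UA le"
  shows "umult imp X Y \<in> UA le"
  using assms(2) unfolding UA_def upper_set_def umult_def by (blast dest: imp_mono)

lemma Union_in_UA: "K \<subseteq> UA le \<Longrightarrow> \<Union>K \<in> UA le"
  unfolding UA_def upper_set_def by blast

lemma mu_in_UA: "F \<in> UA le \<Longrightarrow> X \<in> UA le \<Longrightarrow> mu F X \<in> UA le"
  unfolding UA_def upper_set_def mu_def by blast

lemma umult_mu_subset:
  assumes "umult imp F F \<subseteq> F"
  shows "umult imp (mu F X) (mu F Y) \<subseteq> mu F (umult imp X Y)"
proof -
  have "umult imp (mu F X) (mu F Y) \<subseteq> umult imp F F"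
    and "umult imp (mu F X) (mu F Y) \<subseteq> umult imp X Y"
    by (simp_all add: umult_mono mu_def)
  with assms show ?thesis by (auto simp: mu_def)
qed

lemma conucleus_mu:
  assumes "F \<in> UA le" and "umult imp F F \<subseteq> F"
  shows "conucleus (UA le) (umult imp) (mu F)"
  unfolding conucleus_def
  using mu_in_UA[OF assms(1)] umult_mu_subset[OF assms(2)] by (auto simp: mu_def)

lemma image_mu_UA:
  assumes "F \<in> UA le"
  shows "mu F ` UA le = {U \<in> UA le. U \<subseteq> F}"
proof
  show "mu F ` UA le \<subseteq> {U \<in> UA le. U \<subseteq> F}"
    using mu_in_UA[OF assms] by (auto simp: mu_def)
  show "{U \<in> UA le. U \<subseteq> F} \<subseteq> mu F ` UA le"
  proof
    fix U assume "U \<in> {U \<in> UA le. U \<subseteq> F}"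
    then have "U \<in> UA le" and "U = mu F U" by (auto simp: mu_def)
    then show "U \<in> mu F ` UA le" by blast
  qed
qed

lemma subquantale_UA_below:
  assumes imp_mono: "\<And>x y z. le y z \<Longrightarrow> le (imp x y) (imp x z)"
    and "umult imp F F \<subseteq> F"
  shows "subquantale (UA le) (umult imp) {U \<in> UA le. U \<subseteq> F}"
  unfolding subquantale_def
proof (intro conjI allI impI ballI)
  show "{U \<in> UA le. U \<subseteq> F} \<subseteq> UA le" by blast
next
  fix K assume "K \<subseteq> {U \<in> UA le. U \<subseteq> F}"
  then show "\<Union>K \<in> {U \<in> UA le. U \<subseteq> F}" using Union_in_UA[of K le] by blast
next
  fix U V assume U: "U \<in> {U \<in> UA le. U \<subseteq> F}" and V: "V \<in> {U \<in> UA le. U \<subseteq> F}"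
  have "umult imp U V \<in> UA le" using U umult_in_UA[of le imp U V] imp_mono by blast
  moreover have "umult imp U V \<subseteq> F"
    using U V umult_mono[of U F V F imp] assms(2) by blast
  ultimately show "umult imp U V \<in> {U \<in> UA le. U \<subseteq> F}" by blast
qed

theorem lemma3p1:
  fixes le :: "'a \<Rightarrow> 'a \<Rightarrow> bool" and imp limp :: "'a \<Rightarrow> 'a \<Rightarrow> 'a"
    and X Y F :: "'a set"
  assumes "quantum_B_algebra le imp limp"
    and "X \<in> UA le" and "Y \<in> UA le" and "F \<in> UA le"
    and "qb_filter le imp F"
  shows "umult imp (mu F X) (mu F Y) \<subseteq> mu F (umult imp X Y)
    \<and> conucleus (UA le) (umult imp) (mu F)
    \<and> {U \<in> UA le. U \<subseteq> F} = mu F ` UA le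
    \<and> subquantale (UA le) (umult imp) {U \<in> UA le. U \<subseteq> F}"
proof -
  have FF: "umult imp F F \<subseteq> F" using assms(5) unfolding qb_filter_def by blast
  have imp_mono: "\<And>x y z. le y z \<Longrightarrow> le (imp x y) (imp x z)"
    using quantum_B_algebra_imp_mono[OF assms(1)] .
  show ?thesis
    using umult_mu_subset[OF FF] conucleus_mu[OF assms(4) FF] image_mu_UA[OF assms(4)]
      subquantale_UA_below[of le imp F, OF imp_mono FF] by simp
qed

end
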